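(* Let $(X,d)$ be a proper metric space (every bounded closed set is compact) and let $f:X\to\mathbb{R}$ be continuous with $s[f]:X\to\mathbb{R}$ continuous. Then for every $x\in X$ with $s[f](x)\neq0$ there exist $T>0$ and a $1$-Lipschitz curve $\gamma:[0,T]\to X$ with $\gamma(0)=x$ and \[ f(\gamma(t))=f(x)-\int_0^t s[f](\gamma(s))\,ds\quad\text{for all } t\in[0,T]. \]
   Context: Local slope: $s[f](\bar x):=\limsup_{y\to\bar x}\frac{\max\{f(\bar x)-f(y),0\}}{d(\bar x,y)}$, with $s[f](\bar x)=0$ if $\bar x$ is isolated. *)

theory Defs
  imports "HOL-Analysis.Analysis"
begin

definition local_slope :: "('a::metric_space \<Rightarrow> real) \<Rightarrow> 'a \<Rightarrow> ereal" where
  "local_slope f x =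
     (if at x = bot then 0
      else Limsup (at x) (\<lambda>y. ereal (max (f x - f y) 0 / dist x y)))"

end

(*
  In a proper space a minimiser of f + c d(p,.) over the closed ball B(p,h) cannot lie in
  the open ball where s[f] > c, so some point at distance h from p has f at most f p - c h.
  Taking c just below s[f](p), uniformly in p by continuity of s[f] on compact balls, and
  iterating gives discrete descent chains with step h.  Their piecewise constant
  interpolations are 1-Lipschitz up to h, so a diagonal subsequence converges pointwise to
  a 1-Lipschitz curve \<gamma> with \<gamma> 0 = x.  Passing to the limit in the chain estimates bounds
  the right Dini derivatives of f o \<gamma> from above by -s[f](\<gamma>); the definition of the
  slope together with |\<gamma>'| <= 1 bounds them from below by the same quantity.  Hence
  f o \<gamma> plus the integral of s[f] o \<gamma> is constant.
*)
theory Submission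
  imports Defs "HOL-Complex_Analysis.Great_Picard"
begin

lemma local_slope_nonneg: "0 \<le> local_slope f x"
proof (cases "at x = bot")
  case False
  have "ereal 0 \<le> Limsup (at x) (\<lambda>y. ereal (max (f x - f y) 0 / dist x y))"
    by (rule le_Limsup[OF False]) (auto intro!: always_eventually)
  with False show ?thesis by (simp add: local_slope_def zero_ereal_def)
qed (simp add: local_slope_def)

lemma local_slope_le:
  assumes "0 \<le> c" "d > 0" and bound: "\<And>w. dist w x < d \<Longrightarrow> f x - f w \<le> c * dist x w"
  shows "local_slope f x \<le> ereal c"
proof (cases "at x = bot")
  case False
  have "\<forall>\<^sub>F w in at x. ereal (max (f x - f w) 0 / dist x w) \<le> ereal c"
    unfolding eventually_at
  proof (intro exI[of _ d] conjI ballI impI)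
    fix w assume "w \<noteq> x \<and> dist w x < d"
    then show "ereal (max (f x - f w) 0 / dist x w) \<le> ereal c"
      using bound[of w] \<open>0 \<le> c\<close> by (simp add: divide_le_eq dist_commute)
  qed (use \<open>d > 0\<close> in auto)
  with False show ?thesis
    by (simp add: local_slope_def Limsup_bounded)
qed (use assms in \<open>simp add: local_slope_def\<close>)

lemma local_slope_lessD:
  assumes "local_slope f x < ereal c"
  obtains d where "d > 0" "\<And>w. dist w x < d \<Longrightarrow> f x - f w \<le> c * dist x w"
proof -
  have "\<forall>\<^sub>F w in at x. ereal (max (f x - f w) 0 / dist x w) < ereal c"
  proof (cases "at x = bot")
    case False
    with assms show ?thesis
      by (intro Limsup_lessD) (simp add: local_slope_def)
  qed simp
  then obtain d where "d > 0"
    and d: "\<And>w. w \<noteq> x \<Longrightarrow> dist w x < d \<Longrightarrow> max (f x - f w) 0 / dist x w < c"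
    unfolding eventually_at by auto
  have "f x - f w \<le> c * dist x w" if "dist w x < d" for w
  proof (cases "w = x")
    case False
    with d[OF False that] show ?thesis
      by (simp add: divide_less_eq)
  qed simp
  with \<open>d > 0\<close> show thesis by (rule that)
qed

lemma right_locally_mono_imp_le:
  fixes \<psi> :: "real \<Rightarrow> real"
  assumes "a \<le> b" and cont: "continuous_on {a..b} \<psi>"
    and loc: "\<And>c. c \<in> {a..<b} \<Longrightarrow> \<exists>d>0. \<forall>t. c < t \<and> t < c + d \<and> t \<le> b \<longrightarrow> \<psi> c \<le> \<psi> t"
  shows "\<psi> a \<le> \<psi> b"
proof -
  define S where "S = {t \<in> {a..b}. \<psi> a \<le> \<psi> t}"
  have "S = {a..b} \<inter> \<psi> -` {\<psi> a..}" by (auto simp: S_def)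
  then have "closed S"
    using continuous_closed_preimage[OF cont closed_atLeastAtMost closed_atLeast] by simp
  have "a \<in> S" using \<open>a \<le> b\<close> by (simp add: S_def)
  have "bdd_above S" unfolding S_def by (auto intro: bdd_aboveI[of _ b])
  define c where "c = Sup S"
  have "c \<in> S"
    unfolding c_def using closed_contains_Sup[OF _ \<open>bdd_above S\<close> \<open>closed S\<close>] \<open>a \<in> S\<close> by auto
  have "c = b"
  proof (rule ccontr)
    assume "c \<noteq> b"
    with \<open>c \<in> S\<close> have "c \<in> {a..<b}" by (auto simp: S_def)
    with loc obtain d where "d > 0" and d: "\<forall>t. c < t \<and> t < c + d \<and> t \<le> b \<longrightarrow> \<psi> c \<le> \<psi> t"
      by blast
    define t where "t = min (c + d/2) b"
    have "c < t" using \<open>d > 0\<close> \<open>c \<in> {a..<b}\<close> by (auto simp: t_def)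
    moreover have "\<psi> c \<le> \<psi> t" using d \<open>c < t\<close> \<open>d > 0\<close> by (auto simp: t_def)
    ultimately have "t \<in> S" using \<open>c \<in> S\<close> by (auto simp: S_def t_def)
    then have "t \<le> c" unfolding c_def using \<open>bdd_above S\<close> by (rule cSup_upper)
    with \<open>c < t\<close> show False by simp
  qed
  with \<open>c \<in> S\<close> show ?thesis by (simp add: S_def)
qed

lemma const_if_right_increments_small:
  fixes H :: "real \<Rightarrow> real"
  assumes "a \<le> b" and cont: "continuous_on {a..b} H"
    and small: "\<And>c e. c \<in> {a..<b} \<Longrightarrow> e > 0 \<Longrightarrow>
       \<exists>d>0. \<forall>u. c < u \<and> u < c + d \<and> u \<le> b \<longrightarrow> \<bar>H u - H c\<bar> \<le> e * (u - c)"
  shows "H b = H a"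
proof -
  have right_mono: "e * a - K a \<le> e * b - K b"
    if "e > 0" and K_cont: "continuous_on {a..b} K" and K_abs: "\<And>u c. \<bar>K u - K c\<bar> = \<bar>H u - H c\<bar>"
    for e and K :: "real \<Rightarrow> real"
  proof (rule right_locally_mono_imp_le[where \<psi>="\<lambda>u. e * u - K u", OF \<open>a \<le> b\<close>])
    show "continuous_on {a..b} (\<lambda>u. e * u - K u)" by (intro continuous_intros K_cont)
    fix c assume "c \<in> {a..<b}"
    then obtain d where "d > 0" and d: "\<forall>u. c < u \<and> u < c + d \<and> u \<le> b \<longrightarrow> \<bar>H u - H c\<bar> \<le> e * (u - c)"
      using small \<open>e > 0\<close> by blast
    have "e * c - K c \<le> e * u - K u" if "c < u \<and> u < c + d \<and> u \<le> b" for u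
    proof -
      have "\<bar>K u - K c\<bar> \<le> e * (u - c)" using d that K_abs[of u c] by simp
      then show ?thesis by (simp add: abs_le_iff algebra_simps)
    qed
    with \<open>d > 0\<close> show "\<exists>d>0. \<forall>u. c < u \<and> u < c + d \<and> u \<le> b \<longrightarrow> e * c - K c \<le> e * u - K u"
      by blast
  qed
  have "\<bar>H b - H a\<bar> \<le> e" if "e > 0" for e
  proof -
    define e' where "e' = e / (b - a + 1)"
    have "e' > 0" using \<open>e > 0\<close> \<open>a \<le> b\<close> by (simp add: e'_def)
    have "e' * a - H a \<le> e' * b - H b" "e' * a + H a \<le> e' * b + H b"
      using right_mono[OF \<open>e' > 0\<close> cont] right_mono[OF \<open>e' > 0\<close>, of "\<lambda>u. - H u"] cont
      by (auto intro: continuous_on_minus simp: abs_minus_commute)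
    then have "\<bar>H b - H a\<bar> \<le> e' * (b - a)" by (simp add: abs_le_iff algebra_simps)
    also have "\<dots> \<le> e" using \<open>e > 0\<close> \<open>a \<le> b\<close> by (simp add: e'_def field_simps)
    finally show ?thesis .
  qed
  then show ?thesis
    using field_le_epsilon[of "\<bar>H b - H a\<bar>" 0] by simp
qed

lemma integral_right_increment:
  fixes \<phi> :: "real \<Rightarrow> real"
  assumes cont: "continuous_on {a..b} \<phi>" and "c \<in> {a..b}" "e > 0"
  obtains d where "d > 0"
    "\<And>u. c \<le> u \<Longrightarrow> u < c + d \<Longrightarrow> u \<le> b \<Longrightarrow> \<bar>integral {c..u} \<phi> - (u - c) * \<phi> c\<bar> \<le> e * (u - c)"
proof -
  obtain d where "d > 0" and d: "\<And>v. v \<in> {a..b} \<Longrightarrow> dist v c < d \<Longrightarrow> dist (\<phi> v) (\<phi> c) < e"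
    using cont \<open>c \<in> {a..b}\<close> \<open>e > 0\<close> unfolding continuous_on_iff by blast
  have "\<bar>integral {c..u} \<phi> - (u - c) * \<phi> c\<bar> \<le> e * (u - c)"
    if u: "c \<le> u" "u < c + d" "u \<le> b" for u
  proof -
    have cont_cu: "continuous_on {c..u} \<phi>"
      using \<open>c \<in> {a..b}\<close> u by (auto intro: continuous_on_subset[OF cont])
    have "integral {c..u} \<phi> - (u - c) * \<phi> c = integral {c..u} (\<lambda>v. \<phi> v - \<phi> c)"
      using u cont_cu by (simp add: integral_diff integrable_continuous_interval)
    also have "norm \<dots> \<le> e * (u - c)"
    proof (rule integral_bound)
      show "continuous_on {c..u} (\<lambda>v. \<phi> v - \<phi> c)" by (intro continuous_intros cont_cu)
      show "norm (\<phi> v - \<phi> c) \<le> e" if "v \<in> {c..u}" for v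
        using d[of v] that u \<open>c \<in> {a..b}\<close> by (auto simp: dist_real_def)
    qed (use u in auto)
    finally show ?thesis by simp
  qed
  with \<open>d > 0\<close> show thesis by (rule that)
qed

lemma right_derivative_imp_eq_minus_integral:
  fixes g \<phi> :: "real \<Rightarrow> real"
  assumes cont_g: "continuous_on {a..b} g" and cont_\<phi>: "continuous_on {a..b} \<phi>"
    and upper: "\<And>c e. c \<in> {a..<b} \<Longrightarrow> e > 0 \<Longrightarrow>
       \<exists>d>0. \<forall>u. c < u \<and> u < c + d \<and> u \<le> b \<longrightarrow> g u \<le> g c - (u - c) * (\<phi> c - e)"
    and lower: "\<And>c e. c \<in> {a..<b} \<Longrightarrow> e > 0 \<Longrightarrow>
       \<exists>d>0. \<forall>u. c < u \<and> u < c + d \<and> u \<le> b \<longrightarrow> g c - (u - c) * (\<phi> c + e) \<le> g u"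
    and "t \<in> {a..b}"
  shows "g t = g a - integral {a..t} \<phi>"
proof -
  define H where "H u = g u + integral {a..u} \<phi>" for u
  have int_\<phi>: "\<phi> integrable_on {a..b}" by (rule integrable_continuous_interval[OF cont_\<phi>])
  have "H t = H a"
  proof (rule const_if_right_increments_small[where H=H])
    show "a \<le> t" using \<open>t \<in> {a..b}\<close> by simp
    show "continuous_on {a..t} H"
      unfolding H_def using \<open>t \<in> {a..b}\<close>
      by (intro continuous_intros continuous_on_subset[OF cont_g]
          continuous_on_subset[OF indefinite_integral_continuous_1[OF int_\<phi>]]) auto
    fix c e :: real assume c: "c \<in> {a..<t}" and "e > 0"
    then have "c \<in> {a..<b}" using \<open>t \<in> {a..b}\<close> by auto
    obtain d1 where "d1 > 0" and d1: "\<forall>u. c < u \<and> u < c + d1 \<and> u \<le> b \<longrightarrow> g u \<le> g c - (u - c) * (\<phi> c - e/2)"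
      using upper[OF \<open>c \<in> {a..<b}\<close>, of "e/2"] \<open>e > 0\<close> by auto
    obtain d2 where "d2 > 0" and d2: "\<forall>u. c < u \<and> u < c + d2 \<and> u \<le> b \<longrightarrow> g c - (u - c) * (\<phi> c + e/2) \<le> g u"
      using lower[OF \<open>c \<in> {a..<b}\<close>, of "e/2"] \<open>e > 0\<close> by auto
    obtain d3 where "d3 > 0" and d3: "\<And>u. c \<le> u \<Longrightarrow> u < c + d3 \<Longrightarrow> u \<le> b \<Longrightarrow>
        \<bar>integral {c..u} \<phi> - (u - c) * \<phi> c\<bar> \<le> e/2 * (u - c)"
      using integral_right_increment[OF cont_\<phi>, of c "e/2"] \<open>c \<in> {a..<b}\<close> \<open>e > 0\<close> by auto
    show "\<exists>d>0. \<forall>u. c < u \<and> u < c + d \<and> u \<le> t \<longrightarrow> \<bar>H u - H c\<bar> \<le> e * (u - c)"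
    proof (intro exI[of _ "min d1 (min d2 d3)"] conjI allI impI)
      fix u assume u: "c < u \<and> u < c + min d1 (min d2 d3) \<and> u \<le> t"
      then have "u \<le> b" using \<open>t \<in> {a..b}\<close> by auto
      have "integral {a..c} \<phi> + integral {c..u} \<phi> = integral {a..u} \<phi>"
        using c u \<open>u \<le> b\<close>
        by (intro Henstock_Kurzweil_Integration.integral_combine integrable_on_subinterval[OF int_\<phi>]) auto
      then have "H u - H c = (g u - g c + (u - c) * \<phi> c) + (integral {c..u} \<phi> - (u - c) * \<phi> c)"
        by (simp add: H_def algebra_simps)
      moreover have "\<bar>g u - g c + (u - c) * \<phi> c\<bar> \<le> e/2 * (u - c)"
      proof -
        have "g u \<le> g c - (u - c) * (\<phi> c - e/2)" "g c - (u - c) * (\<phi> c + e/2) \<le> g u"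
          using d1 d2 u \<open>u \<le> b\<close> by auto
        then show ?thesis by (smt (verit) distrib_left right_diff_distrib mult.commute)
      qed
      moreover have "\<bar>integral {c..u} \<phi> - (u - c) * \<phi> c\<bar> \<le> e/2 * (u - c)"
        using d3 u \<open>u \<le> b\<close> by auto
      ultimately show "\<bar>H u - H c\<bar> \<le> e * (u - c)" by linarith
    qed (use \<open>d1 > 0\<close> \<open>d2 > 0\<close> \<open>d3 > 0\<close> in auto)
  qed
  then show ?thesis by (simp add: H_def)
qed

lemma proper_slope_descent:
  fixes f :: "'a::metric_space \<Rightarrow> real"
  assumes compact_balls: "\<And>(y::'a) r. compact (cball y r)"
    and f_cont: "continuous_on UNIV f" and "h > 0"
    and steep: "\<And>w. dist p w < h \<Longrightarrow> ereal c < local_slope f w"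
  obtains y where "dist p y \<le> h" "f y \<le> f p - c * h"
proof (cases "c \<le> 0")
  case True
  with \<open>h > 0\<close> show thesis
    by (intro that[of p]) (auto simp: mult_nonpos_nonneg)
next
  case False
  define \<phi> where "\<phi> w = f w + c * dist p w" for w
  have "compact (cball p h)" by (rule compact_balls)
  moreover have "cball p h \<noteq> {}" using \<open>h > 0\<close> by simp
  moreover have "continuous_on (cball p h) \<phi>"
    unfolding \<phi>_def by (intro continuous_intros continuous_on_subset[OF f_cont]) auto
  ultimately obtain z where z: "z \<in> cball p h" and min: "\<And>w. w \<in> cball p h \<Longrightarrow> \<phi> z \<le> \<phi> w"
    by (metis continuous_attains_inf)
  \<comment> \<open>a minimiser inside the open ball would have slope at most \<open>c\<close>\<close>
  have "\<not> dist p z < h"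
  proof
    assume "dist p z < h"
    have "f z - f w \<le> c * dist z w" if "dist w z < h - dist p z" for w
    proof -
      have "dist p w \<le> dist p z + dist z w" by (rule dist_triangle)
      with that have "\<phi> z \<le> \<phi> w" by (intro min) (auto simp: dist_commute)
      moreover have "c * dist p w \<le> c * dist p z + c * dist z w"
        using mult_left_mono[OF \<open>dist p w \<le> dist p z + dist z w\<close>, of c] False
        by (simp add: distrib_left)
      ultimately show ?thesis by (simp add: \<phi>_def)
    qed
    then have "local_slope f z \<le> ereal c"
      using False \<open>dist p z < h\<close> by (intro local_slope_le[of c "h - dist p z"]) auto
    with steep[OF \<open>dist p z < h\<close>] show False by simp
  qed
  with z have "dist p z = h" by simp
  moreover have "\<phi> z \<le> \<phi> p" using \<open>h > 0\<close> by (intro min) simp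
  ultimately show thesis by (intro that[of z]) (auto simp: \<phi>_def)
qed

lemma uniform_slope_descent:
  fixes f \<sigma> :: "'a::metric_space \<Rightarrow> real"
  assumes compact_balls: "\<And>(y::'a) r. compact (cball y r)"
    and f_cont: "continuous_on UNIV f"
    and slope: "\<And>y. local_slope f y = ereal (\<sigma> y)" and \<sigma>_cont: "continuous_on UNIV \<sigma>"
    and "e > 0"
  obtains \<rho> where "\<rho> > 0"
    "\<And>p h. p \<in> cball x r \<Longrightarrow> 0 < h \<Longrightarrow> h < \<rho> \<Longrightarrow> \<exists>y. dist p y \<le> h \<and> f y \<le> f p - h * (\<sigma> p - e)"
proof -
  have "uniformly_continuous_on (cball x (r + 1)) \<sigma>"
    by (intro compact_uniformly_continuous continuous_on_subset[OF \<sigma>_cont] compact_balls) auto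
  then obtain d where "d > 0" and d: "\<And>p q. p \<in> cball x (r + 1) \<Longrightarrow> q \<in> cball x (r + 1) \<Longrightarrow>
      dist q p < d \<Longrightarrow> dist (\<sigma> q) (\<sigma> p) < e"
    unfolding uniformly_continuous_on_def using \<open>e > 0\<close> by metis
  show thesis
  proof (rule that[of "min d 1"])
    fix p h assume p: "p \<in> cball x r" and "0 < h" and h: "h < min d 1"
    obtain y where "dist p y \<le> h" "f y \<le> f p - (\<sigma> p - e) * h"
    proof (rule proper_slope_descent[OF compact_balls f_cont \<open>0 < h\<close>])
      fix w assume w: "dist p w < h"
      have "dist x w \<le> dist x p + dist p w" by (rule dist_triangle)
      with p w h have "dist (\<sigma> w) (\<sigma> p) < e"
        by (intro d) (auto simp: dist_commute)
      then show "ereal (\<sigma> p - e) < local_slope f w"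
        by (simp add: slope dist_real_def)
    qed
    then show "\<exists>y. dist p y \<le> h \<and> f y \<le> f p - h * (\<sigma> p - e)"
      by (auto simp: mult.commute)
  qed (use \<open>d > 0\<close> in simp)
qed

lemma chain_of_steps:
  fixes x :: "'a::metric_space"
  assumes "0 \<le> h" and step: "\<And>p. p \<in> S \<Longrightarrow> \<exists>y. dist p y \<le> h \<and> P p y"
  obtains Y where "Y 0 = x" "\<And>k. dist (Y k) (Y (Suc k)) \<le> h" "\<And>k. Y k \<in> S \<Longrightarrow> P (Y k) (Y (Suc k))"
proof -
  have "\<forall>p. \<exists>y. dist p y \<le> h \<and> (p \<in> S \<longrightarrow> P p y)"
    using step \<open>0 \<le> h\<close> by (metis dist_self)
  then obtain next_point where "\<And>p. dist p (next_point p) \<le> h \<and> (p \<in> S \<longrightarrow> P p (next_point p))"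
    by metis
  then show thesis
    by (intro that[of "\<lambda>k. (next_point ^^ k) x"]) auto
qed

lemma dist_chain_le:
  fixes Y :: "nat \<Rightarrow> 'a::metric_space"
  assumes step: "\<And>k. dist (Y k) (Y (Suc k)) \<le> h"
  shows "dist (Y i) (Y j) \<le> \<bar>real j - real i\<bar> * h"
proof -
  have forward: "dist (Y i) (Y (i + n)) \<le> real n * h" for i n
  proof (induction n)
    case (Suc n)
    have "dist (Y i) (Y (i + Suc n)) \<le> dist (Y i) (Y (i + n)) + dist (Y (i + n)) (Y (Suc (i + n)))"
      by (simp add: dist_triangle)
    with Suc step[of "i + n"] show ?case by (simp add: algebra_simps)
  qed simp
  show ?thesis
  proof (cases "i \<le> j")
    case True
    then show ?thesis using forward[of i "j - i"] by simp
  next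
    case False
    then show ?thesis using forward[of j "i - j"] by (simp add: dist_commute)
  qed
qed

lemma stepwise_decrease:
  fixes u :: "nat \<Rightarrow> real"
  assumes "i \<le> j" and step: "\<And>k. i \<le> k \<Longrightarrow> k < j \<Longrightarrow> u (Suc k) \<le> u k - c"
  shows "u j \<le> u i - real (j - i) * c"
  using assms
proof (induction j rule: dec_induct)
  case (step k)
  then have "u (Suc k) \<le> u i - real (k - i) * c - c" by fastforce
  with \<open>i \<le> k\<close> show ?case by (simp add: Suc_diff_le algebra_simps)
qed simp

definition step_interpolant :: "real \<Rightarrow> real \<Rightarrow> (nat \<Rightarrow> 'a) \<Rightarrow> real \<Rightarrow> 'a" where
  "step_interpolant T h Y t = Y (nat \<lfloor>clamp 0 T t / h\<rfloor>)"

lemma clamp_real_in_interval: "0 \<le> T \<Longrightarrow> clamp 0 T (t::real) \<in> {0..T}"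
  using clamp_in_interval[of 0 T t] by simp

lemma step_index_bounds:
  fixes t h :: real
  assumes "0 \<le> t" "0 < h"
  shows "real (nat \<lfloor>t / h\<rfloor>) * h \<le> t" "t < real (nat \<lfloor>t / h\<rfloor>) * h + h"
  using floor_divide_lower[OF \<open>0 < h\<close>, of t] floor_divide_upper[OF \<open>0 < h\<close>, of t] assms
  by (auto simp: distrib_right)

lemma step_interpolant_0: "0 \<le> T \<Longrightarrow> step_interpolant T h Y 0 = Y 0"
  using clamp_cancel_cbox[of 0 0 T] by (simp add: step_interpolant_def)

lemma dist_step_interpolant_le:
  fixes Y :: "nat \<Rightarrow> 'a::metric_space"
  assumes "0 \<le> T" "0 < h" and step: "\<And>k. dist (Y k) (Y (Suc k)) \<le> h"
  shows "dist (step_interpolant T h Y s) (step_interpolant T h Y t) \<le> \<bar>s - t\<bar> + h"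
proof -
  define u v where "u = clamp 0 T s" and "v = clamp 0 T t"
  have "0 \<le> u" "0 \<le> v" using clamp_real_in_interval[OF \<open>0 \<le> T\<close>] by (auto simp: u_def v_def)
  have "dist (step_interpolant T h Y s) (step_interpolant T h Y t)
      \<le> \<bar>real (nat \<lfloor>v / h\<rfloor>) - real (nat \<lfloor>u / h\<rfloor>)\<bar> * h"
    unfolding step_interpolant_def u_def v_def by (rule dist_chain_le[where Y=Y, OF step])
  also have "\<dots> = \<bar>real (nat \<lfloor>v / h\<rfloor>) * h - real (nat \<lfloor>u / h\<rfloor>) * h\<bar>"
    using \<open>0 < h\<close> by (simp add: abs_mult_pos flip: left_diff_distrib)
  also have "\<dots> \<le> \<bar>u - v\<bar> + h"
    using step_index_bounds[OF \<open>0 \<le> u\<close> \<open>0 < h\<close>] step_index_bounds[OF \<open>0 \<le> v\<close> \<open>0 < h\<close>]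
    by (smt (verit))
  also have "\<bar>u - v\<bar> \<le> \<bar>s - t\<bar>"
    using dist_clamps_le_dist_args[of 0 T s t] by (simp add: u_def v_def dist_real_def)
  finally show ?thesis by simp
qed

lemma step_interpolant_in_cball:
  fixes Y :: "nat \<Rightarrow> 'a::metric_space"
  assumes "0 \<le> T" "0 < h" "Y 0 = x" and step: "\<And>k. dist (Y k) (Y (Suc k)) \<le> h"
  shows "step_interpolant T h Y t \<in> cball x T"
proof -
  define u where "u = clamp 0 T t"
  have u: "0 \<le> u" "u \<le> T" using clamp_real_in_interval[OF \<open>0 \<le> T\<close>] by (auto simp: u_def)
  have "dist x (Y (nat \<lfloor>u / h\<rfloor>)) \<le> real (nat \<lfloor>u / h\<rfloor>) * h"
    using dist_chain_le[where Y=Y, OF step, of 0 "nat \<lfloor>u / h\<rfloor>"] \<open>Y 0 = x\<close> by simp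
  also have "\<dots> \<le> T" using step_index_bounds[OF \<open>0 \<le> u\<close> \<open>0 < h\<close>] u by linarith
  finally show ?thesis by (simp add: step_interpolant_def u_def)
qed

lemma step_interpolant_descent:
  fixes f \<sigma> :: "'a::metric_space \<Rightarrow> real" and Y :: "nat \<Rightarrow> 'a"
  assumes "0 < h" "Y 0 = x" and step: "\<And>k. dist (Y k) (Y (Suc k)) \<le> h"
    and descent: "\<And>k. Y k \<in> cball x T \<Longrightarrow> f (Y (Suc k)) \<le> f (Y k) - h * (\<sigma> (Y k) - e')"
    and osc: "\<And>p q. p \<in> cball x T \<Longrightarrow> q \<in> cball x T \<Longrightarrow> dist p q < \<delta> \<Longrightarrow> \<sigma> p - e \<le> \<sigma> q - e'"
    and ab: "0 \<le> a" "a \<le> b" "b \<le> T" "b - a + h < \<delta>"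
  shows "f (step_interpolant T h Y b) \<le> f (step_interpolant T h Y a)
      - (b - a) * (\<sigma> (step_interpolant T h Y a) - e) + h * \<bar>\<sigma> (step_interpolant T h Y a) - e\<bar>"
proof -
  define i j where "i = nat \<lfloor>a / h\<rfloor>" and "j = nat \<lfloor>b / h\<rfloor>"
  have "step_interpolant T h Y a = Y i" "step_interpolant T h Y b = Y j"
    using ab clamp_cancel_cbox[of a 0 T] clamp_cancel_cbox[of b 0 T]
    by (simp_all add: step_interpolant_def i_def j_def)
  have "i \<le> j" unfolding i_def j_def using ab \<open>0 < h\<close> by (intro nat_mono floor_mono divide_right_mono) auto
  have i: "real i * h \<le> a" "a < real i * h + h" and j: "real j * h \<le> b" "b < real j * h + h"
    using step_index_bounds[of a h] step_index_bounds[of b h] ab \<open>0 < h\<close> by (auto simp: i_def j_def)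
  have in_cball: "Y k \<in> cball x T" if "k \<le> j" for k
  proof -
    have "dist x (Y k) \<le> real k * h" using dist_chain_le[where Y=Y, OF step, of 0 k] \<open>Y 0 = x\<close> by simp
    also have "\<dots> \<le> real j * h" using that \<open>0 < h\<close> by simp
    finally show ?thesis using j ab by simp
  qed
  define q where "q = \<sigma> (Y i) - e"
  have "f (Y (Suc k)) \<le> f (Y k) - h * q" if "i \<le> k" "k < j" for k
  proof -
    have "dist (Y i) (Y k) \<le> (real k - real i) * h" using dist_chain_le[where Y=Y, OF step, of i k] that by simp
    also have "\<dots> \<le> (real j - real i) * h" using that \<open>0 < h\<close> by simp
    also have "\<dots> < \<delta>" using i j ab by (simp add: algebra_simps)
    finally have "q \<le> \<sigma> (Y k) - e'"
      unfolding q_def using that \<open>i \<le> j\<close> by (intro osc in_cball) auto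
    then have "h * q \<le> h * (\<sigma> (Y k) - e')" using \<open>0 < h\<close> by simp
    moreover have "f (Y (Suc k)) \<le> f (Y k) - h * (\<sigma> (Y k) - e')"
      using that by (intro descent in_cball) simp
    ultimately show ?thesis by linarith
  qed
  then have "f (Y j) \<le> f (Y i) - real (j - i) * (h * q)"
    using \<open>i \<le> j\<close> by (intro stepwise_decrease[where u="\<lambda>k. f (Y k)"]) auto
  moreover have "\<bar>real (j - i) * h - (b - a)\<bar> \<le> h" using i j \<open>i \<le> j\<close> by (simp add: algebra_simps)
  then have "\<bar>real (j - i) * h * q - (b - a) * q\<bar> \<le> h * \<bar>q\<bar>"
    by (simp add: abs_mult mult_right_mono flip: left_diff_distrib)
  ultimately show ?thesis
    unfolding \<open>step_interpolant T h Y a = Y i\<close> \<open>step_interpolant T h Y b = Y j\<close> q_def[symmetric]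
    by (simp add: abs_le_iff algebra_simps)
qed

lemma descent_chains:
  fixes f \<sigma> :: "'a::metric_space \<Rightarrow> real"
  assumes compact_balls: "\<And>(y::'a) r. compact (cball y r)"
    and f_cont: "continuous_on UNIV f"
    and slope: "\<And>y. local_slope f y = ereal (\<sigma> y)" and \<sigma>_cont: "continuous_on UNIV \<sigma>"
  obtains h \<epsilon> :: "nat \<Rightarrow> real" and Y :: "nat \<Rightarrow> nat \<Rightarrow> 'a"
  where "h \<longlonglongrightarrow> 0" "\<epsilon> \<longlonglongrightarrow> 0" "\<And>n. 0 < h n" "\<And>n. Y n 0 = x"
    "\<And>n k. dist (Y n k) (Y n (Suc k)) \<le> h n"
    "\<And>n k. Y n k \<in> cball x T \<Longrightarrow> f (Y n (Suc k)) \<le> f (Y n k) - h n * (\<sigma> (Y n k) - \<epsilon> n)"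
proof -
  define \<epsilon> where "\<epsilon> n = inverse (real (Suc n))" for n
  have "\<exists>\<eta>. 0 < \<eta> \<and> \<eta> \<le> \<epsilon> n \<and>
      (\<forall>p\<in>cball x T. \<exists>y. dist p y \<le> \<eta> \<and> f y \<le> f p - \<eta> * (\<sigma> p - \<epsilon> n))" for n
  proof -
    obtain \<rho> where "\<rho> > 0" and \<rho>: "\<And>p \<eta>. p \<in> cball x T \<Longrightarrow> 0 < \<eta> \<Longrightarrow> \<eta> < \<rho> \<Longrightarrow>
        \<exists>y. dist p y \<le> \<eta> \<and> f y \<le> f p - \<eta> * (\<sigma> p - \<epsilon> n)"
      using uniform_slope_descent[OF compact_balls f_cont slope \<sigma>_cont, where e="\<epsilon> n" and x=x and r=T]
      by (auto simp: \<epsilon>_def)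
    define \<eta> where "\<eta> = min (\<rho> / 2) (\<epsilon> n)"
    have "0 < \<eta>" "\<eta> \<le> \<epsilon> n" "\<eta> < \<rho>" using \<open>\<rho> > 0\<close> by (auto simp: \<eta>_def \<epsilon>_def)
    with \<rho> show ?thesis by blast
  qed
  then obtain h where h: "\<And>n. 0 < h n" "\<And>n. h n \<le> \<epsilon> n"
    and h_step: "\<And>n p. p \<in> cball x T \<Longrightarrow> \<exists>y. dist p y \<le> h n \<and> f y \<le> f p - h n * (\<sigma> p - \<epsilon> n)"
    by metis
  have "\<exists>Z. Z 0 = x \<and> (\<forall>k. dist (Z k) (Z (Suc k)) \<le> h n) \<and>
      (\<forall>k. Z k \<in> cball x T \<longrightarrow> f (Z (Suc k)) \<le> f (Z k) - h n * (\<sigma> (Z k) - \<epsilon> n))" for n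
  proof -
    obtain Z where "Z 0 = x" "\<And>k. dist (Z k) (Z (Suc k)) \<le> h n"
      "\<And>k. Z k \<in> cball x T \<Longrightarrow> f (Z (Suc k)) \<le> f (Z k) - h n * (\<sigma> (Z k) - \<epsilon> n)"
      using chain_of_steps[where S="cball x T" and x=x, OF less_imp_le[OF h(1)] h_step] by blast
    then show ?thesis by blast
  qed
  then obtain Y where Y: "\<And>n. Y n 0 = x" "\<And>n k. dist (Y n k) (Y n (Suc k)) \<le> h n"
    "\<And>n k. Y n k \<in> cball x T \<Longrightarrow> f (Y n (Suc k)) \<le> f (Y n k) - h n * (\<sigma> (Y n k) - \<epsilon> n)"
    by metis
  have "\<epsilon> \<longlonglongrightarrow> 0" unfolding \<epsilon>_def by (rule LIMSEQ_inverse_real_of_nat)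
  moreover have "h \<longlonglongrightarrow> 0"
    using h by (intro tendsto_sandwich[OF _ _ tendsto_const \<open>\<epsilon> \<longlonglongrightarrow> 0\<close>]) (auto intro: always_eventually less_imp_le)
  ultimately show thesis
    by (intro that[of h \<epsilon> Y]) (use h(1) Y in auto)
qed

lemma approximate_descent_curves:
  fixes f \<sigma> :: "'a::metric_space \<Rightarrow> real"
  assumes compact_balls: "\<And>(y::'a) r. compact (cball y r)"
    and f_cont: "continuous_on UNIV f"
    and slope: "\<And>y. local_slope f y = ereal (\<sigma> y)" and \<sigma>_cont: "continuous_on UNIV \<sigma>"
    and "0 \<le> T"
  obtains G :: "nat \<Rightarrow> real \<Rightarrow> 'a" and h :: "nat \<Rightarrow> real"
  where "h \<longlonglongrightarrow> 0" "\<And>n. G n 0 = x" "\<And>n t. G n t \<in> cball x T"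
    "\<And>n s t. dist (G n s) (G n t) \<le> \<bar>s - t\<bar> + h n"
    "\<And>e. e > 0 \<Longrightarrow> \<exists>\<delta>>0. \<forall>\<^sub>F n in sequentially. \<forall>a b. 0 \<le> a \<longrightarrow> a \<le> b \<longrightarrow> b \<le> T \<longrightarrow> b - a < \<delta> \<longrightarrow>
        f (G n b) \<le> f (G n a) - (b - a) * (\<sigma> (G n a) - e) + h n * \<bar>\<sigma> (G n a) - e\<bar>"
proof -
  obtain h \<epsilon> Y where "h \<longlonglongrightarrow> 0" "\<epsilon> \<longlonglongrightarrow> 0" and h: "\<And>n. 0 < h n" and Y0: "\<And>n. Y n 0 = x"
    and step: "\<And>n k. dist (Y n k) (Y n (Suc k)) \<le> h n"
    and descent: "\<And>n k. Y n k \<in> cball x T \<Longrightarrow> f (Y n (Suc k)) \<le> f (Y n k) - h n * (\<sigma> (Y n k) - \<epsilon> n)"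
    using descent_chains[OF compact_balls f_cont slope \<sigma>_cont, where x=x and T=T] by blast
  define G where "G n = step_interpolant T (h n) (Y n)" for n
  have "\<exists>\<delta>>0. \<forall>\<^sub>F n in sequentially. \<forall>a b. 0 \<le> a \<longrightarrow> a \<le> b \<longrightarrow> b \<le> T \<longrightarrow> b - a < \<delta> \<longrightarrow>
      f (G n b) \<le> f (G n a) - (b - a) * (\<sigma> (G n a) - e) + h n * \<bar>\<sigma> (G n a) - e\<bar>"
    if "e > 0" for e
  proof -
    have "uniformly_continuous_on (cball x T) \<sigma>"
      by (intro compact_uniformly_continuous continuous_on_subset[OF \<sigma>_cont] compact_balls) auto
    then obtain d where "d > 0" and d: "\<And>p q. p \<in> cball x T \<Longrightarrow> q \<in> cball x T \<Longrightarrow>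
        dist q p < d \<Longrightarrow> dist (\<sigma> q) (\<sigma> p) < e/2"
      unfolding uniformly_continuous_on_def using \<open>e > 0\<close> by (metis half_gt_zero)
    have "\<forall>\<^sub>F n in sequentially. \<epsilon> n < e/2 \<and> h n < d/2"
      using order_tendstoD(2)[OF \<open>\<epsilon> \<longlonglongrightarrow> 0\<close>, of "e/2"] order_tendstoD(2)[OF \<open>h \<longlonglongrightarrow> 0\<close>, of "d/2"]
        \<open>e > 0\<close> \<open>d > 0\<close> by (auto intro: eventually_conj)
    then have "\<forall>\<^sub>F n in sequentially. \<forall>a b. 0 \<le> a \<longrightarrow> a \<le> b \<longrightarrow> b \<le> T \<longrightarrow> b - a < d/2 \<longrightarrow>
      f (G n b) \<le> f (G n a) - (b - a) * (\<sigma> (G n a) - e) + h n * \<bar>\<sigma> (G n a) - e\<bar>"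
    proof (rule eventually_mono, intro allI impI)
      fix n a b assume n: "\<epsilon> n < e/2 \<and> h n < d/2" and ab: "0 \<le> a" "a \<le> b" "b \<le> T" "b - a < d/2"
      have osc: "\<sigma> p - e \<le> \<sigma> q - \<epsilon> n"
        if "p \<in> cball x T" "q \<in> cball x T" "dist p q < d" for p q
      proof -
        have "\<bar>\<sigma> q - \<sigma> p\<bar> < e/2" using d[OF that(2,1)] that(3) by (simp add: dist_real_def dist_commute abs_minus_commute)
        with n show ?thesis by arith
      qed
      show "f (G n b) \<le> f (G n a) - (b - a) * (\<sigma> (G n a) - e) + h n * \<bar>\<sigma> (G n a) - e\<bar>"
        unfolding G_def using ab n
        by (intro step_interpolant_descent[OF h Y0 step descent osc]) auto
    qed
    with \<open>d > 0\<close> show ?thesis by (intro exI[of _ "d/2"]) auto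
  qed
  moreover have "G n 0 = x" for n
    by (simp add: G_def step_interpolant_0[OF \<open>0 \<le> T\<close>] Y0)
  moreover have "G n t \<in> cball x T" for n t
    unfolding G_def by (intro step_interpolant_in_cball \<open>0 \<le> T\<close> h Y0 step)
  moreover have "dist (G n s) (G n t) \<le> \<bar>s - t\<bar> + h n" for n s t
    unfolding G_def by (intro dist_step_interpolant_le \<open>0 \<le> T\<close> h step)
  ultimately show thesis using \<open>h \<longlonglongrightarrow> 0\<close> that by blast
qed

lemma compact_pointwise_convergent_subsequence:
  fixes F :: "nat \<Rightarrow> 'b \<Rightarrow> 'a::metric_space"
  assumes "compact K" "countable D" and in_K: "\<And>n d. d \<in> D \<Longrightarrow> F n d \<in> K"
  obtains r where "strict_mono r" "\<And>d. d \<in> D \<Longrightarrow> convergent (\<lambda>n. F (r n) d)"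
proof (cases "D = {}")
  case True
  then show thesis using strict_mono_id that by blast
next
  case False
  with \<open>countable D\<close> obtain \<tau> :: "nat \<Rightarrow> 'b" where D: "D = range \<tau>"
    using uncountable_def by blast
  obtain r where "strict_mono r" and r: "\<And>i. convergent (\<lambda>n. F ((id \<circ> r) n) (\<tau> i))"
  proof (rule subsequence_diagonalization_lemma[of "\<lambda>i s. convergent (\<lambda>n. F (s n) (\<tau> i))" id])
    fix i and s :: "nat \<Rightarrow> nat"
    have "F (s n) (\<tau> i) \<in> K" for n using in_K D by auto
    then obtain l k where "strict_mono k" "((\<lambda>n. F (s n) (\<tau> i)) \<circ> k) \<longlonglongrightarrow> l"
      using compact_imp_seq_compact[OF \<open>compact K\<close>] unfolding seq_compact_def by metis
    then show "\<exists>k. strict_mono k \<and> convergent (\<lambda>n. F ((s \<circ> k) n) (\<tau> i))"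
      by (auto simp: convergent_def o_def)
  next
    fix i and s k1 k2 :: "nat \<Rightarrow> nat" and N
    assume "convergent (\<lambda>n. F ((s \<circ> k1) n) (\<tau> i))"
      and tail: "\<And>j. N \<le> j \<Longrightarrow> \<exists>j'. j \<le> j' \<and> k2 j = k1 j'"
    then obtain l where l: "(\<lambda>n. F (s (k1 n)) (\<tau> i)) \<longlonglongrightarrow> l" by (auto simp: convergent_def)
    have "(\<lambda>n. F (s (k2 n)) (\<tau> i)) \<longlonglongrightarrow> l"
      unfolding lim_sequentially
    proof (intro allI impI)
      fix e :: real assume "e > 0"
      with l obtain M where M: "\<And>n. M \<le> n \<Longrightarrow> dist (F (s (k1 n)) (\<tau> i)) l < e"
        unfolding lim_sequentially by blast
      have "dist (F (s (k2 n)) (\<tau> i)) l < e" if "max N M \<le> n" for n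
        using tail[of n] M that by fastforce
      then show "\<exists>M. \<forall>n\<ge>M. dist (F (s (k2 n)) (\<tau> i)) l < e" by blast
    qed
    then show "convergent (\<lambda>n. F ((s \<circ> k2) n) (\<tau> i))" by (auto simp: convergent_def)
  qed auto
  with D show thesis by (intro that) auto
qed

lemma Cauchy_if_Cauchy_on_rationals:
  fixes G :: "nat \<Rightarrow> real \<Rightarrow> 'a::metric_space"
  assumes lip: "\<And>n s t. dist (G n s) (G n t) \<le> \<bar>s - t\<bar> + h n" and "h \<longlonglongrightarrow> 0"
    and Cauchy_rat: "\<And>q. q \<in> \<rat> \<Longrightarrow> Cauchy (\<lambda>n. G n q)"
  shows "Cauchy (\<lambda>n. G n t)"
proof (rule metric_CauchyI)
  fix e :: real assume "e > 0"
  obtain q where "q \<in> \<rat>" "t - e/6 < q" "q < t + e/6"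
    using Rats_dense_in_real[of "t - e/6" "t + e/6"] \<open>e > 0\<close> by auto
  then have "\<bar>t - q\<bar> < e/6" unfolding abs_less_iff by linarith
  obtain M1 where M1: "\<forall>m\<ge>M1. \<forall>n\<ge>M1. dist (G m q) (G n q) < e/3"
    using metric_CauchyD[OF Cauchy_rat[OF \<open>q \<in> \<rat>\<close>], of "e/3"] \<open>e > 0\<close> by auto
  obtain M2 where M2: "\<And>n. M2 \<le> n \<Longrightarrow> h n < e/6"
    using order_tendstoD(2)[OF \<open>h \<longlonglongrightarrow> 0\<close>, of "e/6"] \<open>e > 0\<close> by (auto simp: eventually_sequentially)
  have "dist (G m t) (G n t) < e" if "max M1 M2 \<le> m" "max M1 M2 \<le> n" for m n
  proof -
    have "dist (G m t) (G n t) \<le> dist (G m t) (G m q) + dist (G m q) (G n t)"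
      "dist (G m q) (G n t) \<le> dist (G m q) (G n q) + dist (G n q) (G n t)"
      by (rule dist_triangle)+
    moreover have "dist (G m t) (G m q) < e/6 + e/6"
      using lip[of m t q] M2[of m] \<open>\<bar>t - q\<bar> < e/6\<close> that by simp
    moreover have "dist (G n q) (G n t) < e/6 + e/6"
      using lip[of n q t] M2[of n] \<open>\<bar>t - q\<bar> < e/6\<close> that by (simp add: abs_minus_commute)
    moreover have "dist (G m q) (G n q) < e/3" using M1 that by auto
    ultimately show ?thesis by linarith
  qed
  then show "\<exists>M. \<forall>m\<ge>M. \<forall>n\<ge>M. dist (G m t) (G n t) < e" by blast
qed

lemma lipschitz_limit_subsequence:
  fixes G :: "nat \<Rightarrow> real \<Rightarrow> 'a::metric_space"
  assumes "compact K" and in_K: "\<And>n t. G n t \<in> K"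
    and lip: "\<And>n s t. dist (G n s) (G n t) \<le> \<bar>s - t\<bar> + h n" and "h \<longlonglongrightarrow> 0"
  obtains r \<gamma> where "strict_mono r" "\<And>t. (\<lambda>n. G (r n) t) \<longlonglongrightarrow> \<gamma> t" "1-lipschitz_on UNIV \<gamma>"
proof -
  obtain r where "strict_mono r" and conv_rat: "\<And>q. q \<in> \<rat> \<Longrightarrow> convergent (\<lambda>n. G (r n) q)"
    by (rule compact_pointwise_convergent_subsequence[where F=G, OF \<open>compact K\<close> countable_rat in_K]) blast
  have hr: "(\<lambda>n. h (r n)) \<longlonglongrightarrow> 0"
    using LIMSEQ_subseq_LIMSEQ[OF \<open>h \<longlonglongrightarrow> 0\<close> \<open>strict_mono r\<close>] by (simp add: o_def)
  have "Cauchy (\<lambda>n. G (r n) t)" for t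
    using lip hr by (rule Cauchy_if_Cauchy_on_rationals) (rule convergent_Cauchy[OF conv_rat])
  then have "convergent (\<lambda>n. G (r n) t)" for t
    using compact_imp_complete[OF \<open>compact K\<close>, unfolded complete_def, rule_format, of "\<lambda>n. G (r n) t"]
      in_K by (auto simp: convergent_def)
  then have lim: "(\<lambda>n. G (r n) t) \<longlonglongrightarrow> lim (\<lambda>n. G (r n) t)" for t
    by (simp add: convergent_LIMSEQ_iff)
  have "1-lipschitz_on UNIV (\<lambda>t. lim (\<lambda>n. G (r n) t))"
  proof (rule lipschitz_onI)
    fix s t :: real
    have "(\<lambda>n. \<bar>s - t\<bar> + h (r n)) \<longlonglongrightarrow> \<bar>s - t\<bar> + 0" by (intro tendsto_intros hr)
    then show "dist (lim (\<lambda>n. G (r n) s)) (lim (\<lambda>n. G (r n) t)) \<le> 1 * dist s t"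
      using tendsto_le[OF trivial_limit_sequentially _ tendsto_dist[OF lim lim]] lip
      by (simp add: dist_real_def)
  qed simp
  with \<open>strict_mono r\<close> lim show thesis by (rule that)
qed

lemma limit_curve_descent:
  fixes f \<sigma> :: "'a::metric_space \<Rightarrow> real" and G :: "nat \<Rightarrow> real \<Rightarrow> 'a"
  assumes f_cont: "continuous_on UNIV f" and \<sigma>_cont: "continuous_on UNIV \<sigma>"
    and "strict_mono r" and lim: "\<And>t. (\<lambda>n. G (r n) t) \<longlonglongrightarrow> \<gamma> t" and "h \<longlonglongrightarrow> 0"
    and approx: "\<And>e. e > 0 \<Longrightarrow> \<exists>\<delta>>0. \<forall>\<^sub>F n in sequentially. \<forall>a b. 0 \<le> a \<longrightarrow> a \<le> b \<longrightarrow> b \<le> T \<longrightarrow> b - a < \<delta> \<longrightarrow>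
        f (G n b) \<le> f (G n a) - (b - a) * (\<sigma> (G n a) - e) + h n * \<bar>\<sigma> (G n a) - e\<bar>"
    and "0 \<le> a" "e > 0"
  shows "\<exists>d>0. \<forall>b. a < b \<and> b < a + d \<and> b \<le> T \<longrightarrow> f (\<gamma> b) \<le> f (\<gamma> a) - (b - a) * (\<sigma> (\<gamma> a) - e)"
proof -
  obtain \<delta> where "\<delta> > 0" and ev: "\<forall>\<^sub>F n in sequentially. \<forall>a b. 0 \<le> a \<longrightarrow> a \<le> b \<longrightarrow> b \<le> T \<longrightarrow> b - a < \<delta> \<longrightarrow>
      f (G n b) \<le> f (G n a) - (b - a) * (\<sigma> (G n a) - e) + h n * \<bar>\<sigma> (G n a) - e\<bar>"
    using approx[OF \<open>e > 0\<close>] by blast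
  have f_lim: "(\<lambda>n. f (G (r n) t)) \<longlonglongrightarrow> f (\<gamma> t)" and \<sigma>_lim: "(\<lambda>n. \<sigma> (G (r n) t)) \<longlonglongrightarrow> \<sigma> (\<gamma> t)" for t
    using continuous_on_tendsto_compose[OF f_cont lim] continuous_on_tendsto_compose[OF \<sigma>_cont lim] by auto
  have hr: "(\<lambda>n. h (r n)) \<longlonglongrightarrow> 0"
    using LIMSEQ_subseq_LIMSEQ[OF \<open>h \<longlonglongrightarrow> 0\<close> \<open>strict_mono r\<close>] by (simp add: o_def)
  have "f (\<gamma> b) \<le> f (\<gamma> a) - (b - a) * (\<sigma> (\<gamma> a) - e)" if b: "a < b" "b < a + \<delta>" "b \<le> T" for b
  proof -
    have "(\<lambda>n. f (G (r n) a) - (b - a) * (\<sigma> (G (r n) a) - e) + h (r n) * \<bar>\<sigma> (G (r n) a) - e\<bar>)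
        \<longlonglongrightarrow> f (\<gamma> a) - (b - a) * (\<sigma> (\<gamma> a) - e) + 0 * \<bar>\<sigma> (\<gamma> a) - e\<bar>"
      by (intro tendsto_intros f_lim \<sigma>_lim hr)
    moreover have "\<forall>\<^sub>F n in sequentially.
        f (G (r n) b) \<le> f (G (r n) a) - (b - a) * (\<sigma> (G (r n) a) - e) + h (r n) * \<bar>\<sigma> (G (r n) a) - e\<bar>"
      using eventually_subseq[OF \<open>strict_mono r\<close> ev] by eventually_elim (use \<open>0 \<le> a\<close> b in auto)
    ultimately show ?thesis
      using tendsto_le[OF trivial_limit_sequentially _ f_lim] by simp
  qed
  with \<open>\<delta> > 0\<close> show ?thesis by blast
qed

lemma lipschitz_curve_slope_bound:
  fixes f \<sigma> :: "'a::metric_space \<Rightarrow> real"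
  assumes "1-lipschitz_on UNIV \<gamma>" and slope: "\<And>y. local_slope f y = ereal (\<sigma> y)" and "e > 0"
  shows "\<exists>d>0. \<forall>b. a < b \<and> b < a + d \<longrightarrow> f (\<gamma> a) - (b - a) * (\<sigma> (\<gamma> a) + e) \<le> f (\<gamma> b)"
proof -
  have "local_slope f (\<gamma> a) < ereal (\<sigma> (\<gamma> a) + e)" using slope \<open>e > 0\<close> by simp
  then obtain d where "d > 0" and d: "\<And>w. dist w (\<gamma> a) < d \<Longrightarrow> f (\<gamma> a) - f w \<le> (\<sigma> (\<gamma> a) + e) * dist (\<gamma> a) w"
    by (rule local_slope_lessD[where f=f and x="\<gamma> a"]) auto
  have "0 \<le> \<sigma> (\<gamma> a)" using local_slope_nonneg[of f "\<gamma> a"] slope by simp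
  have "f (\<gamma> a) - (b - a) * (\<sigma> (\<gamma> a) + e) \<le> f (\<gamma> b)" if "a < b" "b < a + d" for b
  proof -
    have "dist (\<gamma> a) (\<gamma> b) \<le> b - a"
      using lipschitz_onD[OF assms(1), of a b] that by (simp add: dist_real_def)
    then have "dist (\<gamma> b) (\<gamma> a) < d" using that by (simp add: dist_commute)
    then have "f (\<gamma> a) - f (\<gamma> b) \<le> (\<sigma> (\<gamma> a) + e) * dist (\<gamma> a) (\<gamma> b)" by (rule d)
    also have "\<dots> \<le> (\<sigma> (\<gamma> a) + e) * (b - a)"
      using \<open>dist (\<gamma> a) (\<gamma> b) \<le> b - a\<close> \<open>0 \<le> \<sigma> (\<gamma> a)\<close> \<open>e > 0\<close> by (intro mult_left_mono) auto
    finally show ?thesis by (simp add: algebra_simps)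
  qed
  with \<open>d > 0\<close> show ?thesis by blast
qed

lemma slope_descent_curve:
  fixes f \<sigma> :: "'a::metric_space \<Rightarrow> real"
  assumes compact_balls: "\<And>(y::'a) r. compact (cball y r)"
    and f_cont: "continuous_on UNIV f"
    and slope: "\<And>y. local_slope f y = ereal (\<sigma> y)" and \<sigma>_cont: "continuous_on UNIV \<sigma>"
    and "0 \<le> T"
  obtains \<gamma> where "\<gamma> 0 = x" "1-lipschitz_on UNIV \<gamma>"
    "\<And>a e. a \<in> {0..<T} \<Longrightarrow> e > 0 \<Longrightarrow>
       \<exists>d>0. \<forall>b. a < b \<and> b < a + d \<and> b \<le> T \<longrightarrow> f (\<gamma> b) \<le> f (\<gamma> a) - (b - a) * (\<sigma> (\<gamma> a) - e)"
proof -
  obtain G h where "h \<longlonglongrightarrow> 0" and G0: "\<And>n. G n 0 = x" and G_cball: "\<And>n t. G n t \<in> cball x T"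
    and G_lip: "\<And>n s t. dist (G n s) (G n t) \<le> \<bar>s - t\<bar> + h n"
    and approx: "\<And>e. e > 0 \<Longrightarrow> \<exists>\<delta>>0. \<forall>\<^sub>F n in sequentially. \<forall>a b. 0 \<le> a \<longrightarrow> a \<le> b \<longrightarrow> b \<le> T \<longrightarrow>
        b - a < \<delta> \<longrightarrow> f (G n b) \<le> f (G n a) - (b - a) * (\<sigma> (G n a) - e) + h n * \<bar>\<sigma> (G n a) - e\<bar>"
    by (rule approximate_descent_curves[OF compact_balls f_cont slope \<sigma>_cont \<open>0 \<le> T\<close>, where x=x])
      (rule that)
  obtain r \<gamma> where "strict_mono r" and lim: "\<And>t. (\<lambda>n. G (r n) t) \<longlonglongrightarrow> \<gamma> t"
    and "1-lipschitz_on UNIV \<gamma>"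
    by (rule lipschitz_limit_subsequence[OF compact_balls G_cball G_lip \<open>h \<longlonglongrightarrow> 0\<close>]) (rule that)
  moreover have "\<gamma> 0 = x" using LIMSEQ_unique[OF lim[of 0]] by (simp add: G0)
  moreover note limit_curve_descent[OF f_cont \<sigma>_cont \<open>strict_mono r\<close> lim \<open>h \<longlonglongrightarrow> 0\<close> approx]
  ultimately show thesis by (intro that) auto
qed

theorem corollary3p6:
  fixes f :: "'a::metric_space \<Rightarrow> real" and x :: 'a
  assumes proper: "\<And>S :: 'a set. bounded S \<Longrightarrow> closed S \<Longrightarrow> compact S"
    and f_cont: "continuous_on UNIV f"
    and slope_finite: "\<And>y. local_slope f y < \<infinity>"
    and slope_cont: "continuous_on UNIV (\<lambda>y. real_of_ereal (local_slope f y))"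
    and nz: "local_slope f x \<noteq> 0"
  shows "\<exists>T>0. \<exists>\<gamma> :: real \<Rightarrow> 'a.
           \<gamma> 0 = x \<and>
           (\<forall>s\<in>{0..T}. \<forall>t\<in>{0..T}. dist (\<gamma> s) (\<gamma> t) \<le> \<bar>s - t\<bar>) \<and>
           (\<forall>t\<in>{0..T}. f (\<gamma> t) = f x - integral {0..t} (\<lambda>s. real_of_ereal (local_slope f (\<gamma> s))))"
proof -
  define \<sigma> where "\<sigma> y = real_of_ereal (local_slope f y)" for y
  have slope: "local_slope f y = ereal (\<sigma> y)" for y
    using local_slope_nonneg[of f y] slope_finite[of y] by (cases "local_slope f y") (auto simp: \<sigma>_def)
  have \<sigma>_cont: "continuous_on UNIV \<sigma>" using slope_cont by (simp add: \<sigma>_def[abs_def])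
  have compact_balls: "compact (cball y r)" for y :: 'a and r by (rule proper) simp_all
  obtain \<gamma> where "\<gamma> 0 = x" and lip: "1-lipschitz_on UNIV \<gamma>" and upper: "\<And>a e. a \<in> {0..<1} \<Longrightarrow> e > 0 \<Longrightarrow>
      \<exists>d>0. \<forall>b. a < b \<and> b < a + d \<and> b \<le> 1 \<longrightarrow> f (\<gamma> b) \<le> f (\<gamma> a) - (b - a) * (\<sigma> (\<gamma> a) - e)"
    by (rule slope_descent_curve[OF compact_balls f_cont slope \<sigma>_cont zero_le_one, where x=x]) (rule that)
  have cont_\<gamma>: "continuous_on {0..1} \<gamma>"
    using lipschitz_on_continuous_on[OF lip] continuous_on_subset by blast
  have "f (\<gamma> t) = f (\<gamma> 0) - integral {0..t} (\<lambda>s. \<sigma> (\<gamma> s))" if "t \<in> {0..1}" for t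
  proof (rule right_derivative_imp_eq_minus_integral[OF _ _ upper _ that])
    show "continuous_on {0..1} (\<lambda>t. f (\<gamma> t))" "continuous_on {0..1} (\<lambda>t. \<sigma> (\<gamma> t))"
      using continuous_on_compose2[OF f_cont cont_\<gamma>] continuous_on_compose2[OF \<sigma>_cont cont_\<gamma>] by auto
    show "\<exists>d>0. \<forall>u. c < u \<and> u < c + d \<and> u \<le> 1 \<longrightarrow> f (\<gamma> c) - (u - c) * (\<sigma> (\<gamma> c) + e) \<le> f (\<gamma> u)"
      if "e > 0" for c e
      using lipschitz_curve_slope_bound[OF lip slope that, of c] by auto
  qed
  moreover have "dist (\<gamma> s) (\<gamma> t) \<le> \<bar>s - t\<bar>" for s t
    using lipschitz_onD[OF lip, of s t] by (simp add: dist_real_def)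
  ultimately show ?thesis
    using \<open>\<gamma> 0 = x\<close> by (intro exI[of _ 1] conjI exI[of _ \<gamma>] ballI) (simp_all add: \<sigma>_def)
qed

end
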